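(* Let $\mathcal{V}$ be a finely representable action of $\Gamma^+$ on a unital C$^*$-algebra $\mathcal{A}$. Then there exists a unique action $\mathcal{H}$ of $\Gamma^+$ on $\mathcal{A}$ such that $(\mathcal{V},\mathcal{H})$ is a complete interaction. Moreover, for every covariant representation $(C,\sigma,U)$ of $\mathcal{V}$, $$\sigma(\mathcal{V}_x(a))=U_x\sigma(a)U_x^*,\qquad \sigma(\mathcal{H}_x(a))=U_x^*\sigma(a)U_x,\qquad a\in\mathcal{A},\ x\in\Gamma^+.$$
   Context: $\Gamma$ is a totally ordered abelian group with identity $0$ and $\Gamma^+=\{x\in\Gamma:0\le x\}$. An action of $\Gamma^+$ on $\mathcal{A}$ is a map $x\mapsto\mathcal{V}_x$ from $\Gamma^+$ into the bounded positive linear maps $\mathcal{A}\to\mathcal{A}$ with $\mathcal{V}_0=\mathrm{Id}$ and $\mathcal{V}_x\circ\mathcal{V}_y=\mathcal{V}_{x+y}$. A covariant representation of $\mathcal{V}$ is a triple $(C,\sigma,U)$ where $C$ is a unital C$^*$-algebra, $\sigma:\mathcal{A}\to C$ is a unital injective $*$-homomorphism, and $U:\Gamma^+\to C$, $x\mapsto U_x$, is a semigroup homomorphism (into the multiplicative semigroup of $C$) such that each $U_x$ is a partial isometry and $\sigma(\mathcal{V}_x(a))=U_x\sigma(a)U_x^*$ and $U_x^*\sigma(a)U_x\in\sigma(\mathcal{A})$ for all $a\in\mathcal{A}$, $x\in\Gamma^+$. The action $\mathcal{V}$ is finely representable if it admits a covariant representation. An interaction is a pair $(\mathcal{V},\mathcal{H})$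 of actions such that for every $x\in\Gamma^+$: (i) $\mathcal{V}_x\mathcal{H}_x\mathcal{V}_x=\mathcal{V}_x$; (ii) $\mathcal{H}_x\mathcal{V}_x\mathcal{H}_x=\mathcal{H}_x$; (iii) $\mathcal{V}_x(ab)=\mathcal{V}_x(a)\mathcal{V}_x(b)$ whenever $a$ or $b$ belongs to $\mathcal{H}_x(\mathcal{A})$; (iv) $\mathcal{H}_x(ab)=\mathcal{H}_x(a)\mathcal{H}_x(b)$ whenever $a$ or $b$ belongs to $\mathcal{V}_x(\mathcal{A})$. It is complete if moreover $\mathcal{H}_x(\mathcal{V}_x(a))=\mathcal{H}_x(1)a\mathcal{H}_x(1)$ and $\mathcal{V}_x(\mathcal{H}_x(a))=\mathcal{V}_x(1)a\mathcal{V}_x(1)$ for all $x\in\Gamma^+$, $a\in\mathcal{A}$, and $\mathcal{H}_y(1)\mathcal{V}_x(1)=\mathcal{V}_x(1)\mathcal{H}_y(1)$ for all $x,y\in\Gamma^+$. *)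

theory Defs
  imports Complex_Main
begin

class cstar_algebra = real_normed_algebra_1 + banach +
  fixes scaleC :: "complex \<Rightarrow> 'a \<Rightarrow> 'a"
    and adj :: "'a \<Rightarrow> 'a"
  assumes scaleC_add_right: "scaleC c (x + y) = scaleC c x + scaleC c y"
    and scaleC_add_left: "scaleC (b + c) x = scaleC b x + scaleC c x"
    and scaleC_scaleC: "scaleC b (scaleC c x) = scaleC (b * c) x"
    and scaleC_one: "scaleC 1 x = x"
    and scaleR_scaleC: "scaleR r x = scaleC (complex_of_real r) x"
    and norm_scaleC: "norm (scaleC c x) = cmod c * norm x"
    and mult_scaleC_left: "scaleC c x * y = scaleC c (x * y)"
    and mult_scaleC_right: "x * scaleC c y = scaleC c (x * y)"
    and adj_adj: "adj (adj x) = x"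
    and adj_add: "adj (x + y) = adj x + adj y"
    and adj_mult: "adj (x * y) = adj y * adj x"
    and adj_scaleC: "adj (scaleC c x) = scaleC (cnj c) (adj x)"
    and cstar_identity: "norm (adj x * x) = norm x * norm x"

definition invertible_el :: "'a::cstar_algebra \<Rightarrow> bool" where
  "invertible_el a \<longleftrightarrow> (\<exists>b. a * b = 1 \<and> b * a = 1)"

definition spectrum_el :: "'a::cstar_algebra \<Rightarrow> complex set" where
  "spectrum_el a = {z. \<not> invertible_el (a - scaleC z 1)}"

definition positive_el :: "'a::cstar_algebra \<Rightarrow> bool" where
  "positive_el a \<longleftrightarrow> adj a = a \<and> (\<forall>z\<in>spectrum_el a. z \<in> \<real> \<and> 0 \<le> Re z)"

definition clinear_map :: "('a::cstar_algebra \<Rightarrow> 'b::cstar_algebra) \<Rightarrow> bool" where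
  "clinear_map f \<longleftrightarrow> (\<forall>x y. f (x + y) = f x + f y) \<and> (\<forall>c x. f (scaleC c x) = scaleC c (f x))"

definition bounded_map :: "('a::cstar_algebra \<Rightarrow> 'b::cstar_algebra) \<Rightarrow> bool" where
  "bounded_map f \<longleftrightarrow> (\<exists>K. \<forall>x. norm (f x) \<le> K * norm x)"

definition bounded_positive_linear :: "('a::cstar_algebra \<Rightarrow> 'a) \<Rightarrow> bool" where
  "bounded_positive_linear f \<longleftrightarrow> clinear_map f \<and> bounded_map f \<and>
     (\<forall>a. positive_el a \<longrightarrow> positive_el (f a))"

definition projection_el :: "'a::cstar_algebra \<Rightarrow> bool" where
  "projection_el p \<longleftrightarrow> p * p = p \<and> adj p = p"

definition partial_isometry :: "'a::cstar_algebra \<Rightarrow> bool" where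
  "partial_isometry u \<longleftrightarrow> projection_el (adj u * u)"

text \<open>Only the values at x >= 0 are meaningful.\<close>
definition action :: "('g::linordered_ab_group_add \<Rightarrow> 'a::cstar_algebra \<Rightarrow> 'a) \<Rightarrow> bool" where
  "action V \<longleftrightarrow> (\<forall>x\<ge>0. bounded_positive_linear (V x)) \<and> V 0 = id \<and>
     (\<forall>x\<ge>0. \<forall>y\<ge>0. V x \<circ> V y = V (x + y))"

definition unital_injective_star_hom :: "('a::cstar_algebra \<Rightarrow> 'c::cstar_algebra) \<Rightarrow> bool" where
  "unital_injective_star_hom \<sigma> \<longleftrightarrow> clinear_map \<sigma> \<and> (\<forall>a b. \<sigma> (a * b) = \<sigma> a * \<sigma> b) \<and>
     (\<forall>a. \<sigma> (adj a) = adj (\<sigma> a)) \<and> \<sigma> 1 = 1 \<and> inj \<sigma>"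

definition covariant_rep ::
  "('a::cstar_algebra \<Rightarrow> 'c::cstar_algebra) \<Rightarrow> ('g::linordered_ab_group_add \<Rightarrow> 'c) \<Rightarrow> ('g \<Rightarrow> 'a \<Rightarrow> 'a) \<Rightarrow> bool" where
  "covariant_rep \<sigma> U V \<longleftrightarrow> unital_injective_star_hom \<sigma> \<and>
     (\<forall>x\<ge>0. \<forall>y\<ge>0. U (x + y) = U x * U y) \<and>
     (\<forall>x\<ge>0. partial_isometry (U x)) \<and>
     (\<forall>x\<ge>0. \<forall>a. \<sigma> (V x a) = U x * \<sigma> a * adj (U x) \<and> adj (U x) * \<sigma> a * U x \<in> range \<sigma>)"

definition interaction :: "('g::linordered_ab_group_add \<Rightarrow> 'a::cstar_algebra \<Rightarrow> 'a) \<Rightarrow> ('g \<Rightarrow> 'a \<Rightarrow> 'a) \<Rightarrow> bool" where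
  "interaction V H \<longleftrightarrow> action V \<and> action H \<and> (\<forall>x\<ge>0.
     V x \<circ> H x \<circ> V x = V x \<and> H x \<circ> V x \<circ> H x = H x \<and>
     (\<forall>a b. a \<in> range (H x) \<or> b \<in> range (H x) \<longrightarrow> V x (a * b) = V x a * V x b) \<and>
     (\<forall>a b. a \<in> range (V x) \<or> b \<in> range (V x) \<longrightarrow> H x (a * b) = H x a * H x b))"

definition complete_interaction :: "('g::linordered_ab_group_add \<Rightarrow> 'a::cstar_algebra \<Rightarrow> 'a) \<Rightarrow> ('g \<Rightarrow> 'a \<Rightarrow> 'a) \<Rightarrow> bool" where
  "complete_interaction V H \<longleftrightarrow> interaction V H \<and>
     (\<forall>x\<ge>0. \<forall>a. H x (V x a) = H x 1 * a * H x 1 \<and> V x (H x a) = V x 1 * a * V x 1) \<and>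
     (\<forall>x\<ge>0. \<forall>y\<ge>0. H y 1 * V x 1 = V x 1 * H y 1)"

end

theory Submission
  imports Defs "HOL-Analysis.Topology_Euclidean_Space"
begin

text \<open>
  For a covariant representation \<open>(C, \<sigma>, U)\<close> the only possible choice is
  \<open>\<H>\<^sub>x a = \<sigma>\<inverse> (U\<^sub>x\<^sup>* \<sigma> a U\<^sub>x)\<close>, which makes sense because \<open>U\<^sub>x\<^sup>* \<sigma>(\<A>) U\<^sub>x \<subseteq> \<sigma>(\<A>)\<close>.
  The interaction identities are then partial isometry algebra; \<open>\<H>\<^sub>y 1\<close> and \<open>\<V>\<^sub>x 1\<close> commute
  because \<open>U\<^sub>y U\<^sub>x = U\<^sub>x\<^sub>+\<^sub>y\<close> is again a partial isometry. \<open>\<H>\<^sub>x\<close> is positive and contractive since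
  away from \<open>0\<close> the spectrum of \<open>U\<^sub>x\<^sup>* c U\<^sub>x\<close> lies in that of \<open>U\<^sub>x U\<^sub>x\<^sup>* c U\<^sub>x U\<^sub>x\<^sup>*\<close>, compressions of
  positive elements are positive, and the norm of a self-adjoint element is bounded by its
  spectral radius. The latter is proved without holomorphic functional calculus: averaging the
  resolvent \<open>(1 - w x)\<inverse>\<close> over the \<open>N\<close>-th roots of unity gives \<open>(1 - w\<^sup>N x\<^sup>N)\<inverse>\<close>, and this average
  tends to \<open>1\<close> as \<open>N \<rightarrow> \<infinity>\<close>.
  Conversely, if \<open>(\<V>, \<H>)\<close> is any complete interaction, the completeness identities force
  \<open>\<sigma>(\<H>\<^sub>x 1)\<close> to be the identity on the source projection \<open>U\<^sub>x\<^sup>* U\<^sub>x\<close>, whence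
  \<open>\<sigma>(\<H>\<^sub>x a) = U\<^sub>x\<^sup>* \<sigma>(a) U\<^sub>x\<close>; this gives uniqueness and the formula for every covariant
  representation.
\<close>

section \<open>Complex scalars and the involution\<close>

definition of_complex :: "complex \<Rightarrow> 'a::cstar_algebra" where
  "of_complex c = scaleC c 1"

lemma scaleC_conv_of_complex: "scaleC c x = of_complex c * (x::'a::cstar_algebra)"
  by (simp add: of_complex_def mult_scaleC_left)

lemma of_complex_commute: "of_complex c * (x::'a::cstar_algebra) = x * of_complex c"
  by (metis scaleC_conv_of_complex of_complex_def mult_scaleC_right mult_1_right)

lemma mult_of_complex_left_commute: "x * (of_complex c * y) = of_complex c * (x * (y::'a::cstar_algebra))"
  by (metis of_complex_commute mult.assoc)

lemma of_complex_add: "of_complex (a + b) = (of_complex a + of_complex b :: 'a::cstar_algebra)"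
  by (simp add: of_complex_def scaleC_add_left)

lemma of_complex_mult: "of_complex (a * b) = (of_complex a * of_complex b :: 'a::cstar_algebra)"
  by (metis of_complex_def scaleC_conv_of_complex scaleC_scaleC)

lemma of_complex_1 [simp]: "of_complex 1 = (1::'a::cstar_algebra)"
  by (simp add: of_complex_def scaleC_one)

lemma of_complex_0 [simp]: "of_complex 0 = (0::'a::cstar_algebra)"
  using of_complex_add[of 0 0, where 'a='a] by simp

lemma of_complex_minus: "of_complex (- a) = (- of_complex a :: 'a::cstar_algebra)"
  using minus_unique[of "of_complex a" "of_complex (- a) :: 'a"] of_complex_add[of a "- a", where 'a='a]
  by simp

lemma of_complex_diff: "of_complex (a - b) = (of_complex a - of_complex b :: 'a::cstar_algebra)"
  using of_complex_add[of a "- b", where 'a='a] by (simp add: of_complex_minus)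

lemma of_complex_sum: "of_complex (sum f A) = (\<Sum>i\<in>A. of_complex (f i) :: 'a::cstar_algebra)"
  by (induct A rule: infinite_finite_induct) (simp_all add: of_complex_add)

lemma of_complex_of_nat: "of_complex (of_nat n) = (of_nat n :: 'a::cstar_algebra)"
  by (induct n) (simp_all add: of_complex_add)

lemma norm_of_complex_mult: "norm (of_complex c * (x::'a::cstar_algebra)) = cmod c * norm x"
  by (metis norm_scaleC scaleC_conv_of_complex)

lemma norm_of_complex: "norm (of_complex c :: 'a::cstar_algebra) = cmod c"
  using norm_of_complex_mult[of c "1::'a"] by simp

lemma power_of_complex_mult: "(of_complex w * x) ^ n = of_complex (w ^ n) * (x::'a::cstar_algebra) ^ n"
  by (induct n) (simp_all add: of_complex_mult mult.assoc, metis mult.assoc of_complex_commute)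

declare adj_adj [simp]

lemma adj_0 [simp]: "adj 0 = (0::'a::cstar_algebra)"
  by (metis add_cancel_right_right adj_add)

lemma adj_minus: "adj (- x) = - adj (x::'a::cstar_algebra)"
  by (metis add.right_inverse adj_add adj_0 eq_neg_iff_add_eq_0)

lemma adj_diff: "adj (x - y) = adj x - adj (y::'a::cstar_algebra)"
  by (metis adj_add adj_minus diff_conv_add_uminus)

lemma adj_1 [simp]: "adj 1 = (1::'a::cstar_algebra)"
  by (metis adj_adj adj_mult mult.right_neutral mult_1_left)

lemma adj_of_complex: "adj (of_complex c) = (of_complex (cnj c) :: 'a::cstar_algebra)"
  by (simp add: of_complex_def adj_scaleC)

lemma adj_power: "adj (x ^ n) = adj (x::'a::cstar_algebra) ^ n"
  by (induct n) (simp_all add: adj_mult power_commutes)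

lemma norm_adj_mult_self: "norm (adj x * x) = norm (x::'a::cstar_algebra) ^ 2"
  by (simp add: cstar_identity power2_eq_square)

lemma adj_mult_self_eq_0: "adj x * x = 0 \<Longrightarrow> x = (0::'a::cstar_algebra)"
  by (metis cstar_identity mult_eq_0_iff norm_eq_zero)

lemma norm_adj: "norm (adj x) = norm (x::'a::cstar_algebra)"
proof -
  have le: "norm y \<le> norm (adj y)" for y :: 'a
  proof (cases "y = 0")
    case False
    have "norm y * norm y \<le> norm (adj y) * norm y"
      by (metis cstar_identity norm_mult_ineq)
    thus ?thesis using False by simp
  qed simp
  show ?thesis using le[of x] le[of "adj x"] by simp
qed

lemma norm_power2_self_adjoint:
  assumes "adj s = s"
  shows "norm (s ^ (2 ^ k)) = norm (s::'a::cstar_algebra) ^ (2 ^ k)"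
proof (induct k)
  case (Suc k)
  have "adj (s ^ 2 ^ k) = s ^ 2 ^ k" using assms by (simp add: adj_power)
  then have "norm (s ^ (2 ^ Suc k)) = norm (s ^ 2 ^ k) ^ 2"
    by (metis norm_adj_mult_self power_add mult_2 power_Suc)
  also have "\<dots> = norm s ^ (2 ^ Suc k)" using Suc by (simp flip: power_mult add: mult.commute)
  finally show ?case .
qed simp

lemma norm_mult3_le: "norm (a * b * c) \<le> norm a * norm b * norm (c::'a::real_normed_algebra)"
  by (metis mult_right_mono norm_ge_zero norm_mult_ineq order_trans)

section \<open>Projections and partial isometries\<close>

lemma projection_el_norm_le: "projection_el p \<Longrightarrow> norm (p::'a::cstar_algebra) \<le> 1"
  unfolding projection_el_def
  by (metis cstar_identity mult_cancel_right1 norm_eq_zero norm_ge_zero order_refl zero_le_one)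

lemma projection_el_one_minus: "projection_el p \<Longrightarrow> projection_el (1 - (p::'a::cstar_algebra))"
  by (auto simp: projection_el_def algebra_simps adj_diff)

lemma partial_isometry_mult_adj_mult:
  assumes "partial_isometry (u::'a::cstar_algebra)"
  shows "u * (adj u * u) = u"
proof -
  let ?P = "adj u * u"
  have P: "?P * ?P = ?P" "adj ?P = ?P"
    using assms by (auto simp: partial_isometry_def projection_el_def)
  let ?d = "u - u * ?P"
  have "adj ?d * ?d = ?P - ?P * ?P - ?P * ?P + ?P * ?P * ?P"
    using P(2) by (simp add: adj_diff adj_mult algebra_simps)
  also have "\<dots> = 0" using P(1) by (simp add: mult.assoc)
  finally have "?d = 0" by (rule adj_mult_self_eq_0)
  thus ?thesis by simp
qed

lemma partial_isometry_adj:
  assumes "partial_isometry (u::'a::cstar_algebra)"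
  shows "partial_isometry (adj u)"
  using partial_isometry_mult_adj_mult[OF assms]
  unfolding partial_isometry_def projection_el_def
  by (metis adj_adj adj_mult mult.assoc)

lemma partial_isometry_adj_mult_adj:
  "partial_isometry (u::'a::cstar_algebra) \<Longrightarrow> adj u * (u * adj u) = adj u"
  by (metis adj_adj partial_isometry_adj partial_isometry_mult_adj_mult)

lemma partial_isometry_mult_projections_commute:
  assumes a: "partial_isometry (a::'a::cstar_algebra)" and b: "partial_isometry b"
    and ab: "partial_isometry (a * b)"
  shows "(adj a * a) * (b * adj b) = (b * adj b) * (adj a * a)"
proof -
  define e where "e = adj a * a"
  define f where "f = b * adj b"
  have e: "e * e = e" "adj e = e"
    using a by (auto simp: e_def partial_isometry_def projection_el_def)
  have f: "f * f = f" "adj f = f"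
    using partial_isometry_adj[OF b] by (simp_all add: f_def partial_isometry_def projection_el_def)
  have e3: "e * (e * x) = e * x" for x by (metis e(1) mult.assoc)
  have f3: "f * (f * x) = f * x" for x by (metis f(1) mult.assoc)
  have "adj (e * b) * (e * b) = adj (a * b) * (a * b)"
    using e e3 by (simp add: e_def adj_mult mult.assoc)
  hence "partial_isometry (e * b)" using ab by (simp add: partial_isometry_def)
  hence "projection_el (e * b * adj (e * b))"
    using partial_isometry_adj by (fastforce simp: partial_isometry_def)
  moreover have "e * b * adj (e * b) = e * f * e" using e by (simp add: f_def adj_mult mult.assoc)
  ultimately have "e * f * e * (e * f * e) = e * f * e" by (simp add: projection_el_def)
  hence efe: "e * (f * (e * (f * e))) = e * (f * e)" using e e3 by (simp add: mult.assoc)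
  \<comment> \<open>\<open>f * e - e * f * e\<close> has vanishing C*-norm\<close>
  define w where "w = f * e - e * f * e"
  have "adj w * w = (e * f - e * f * e) * (f * e - e * f * e)"
    using e f by (simp add: w_def adj_diff adj_mult mult.assoc)
  also have "\<dots> = 0" using efe e e3 f f3 by (simp add: algebra_simps)
  finally have "w = 0" by (rule adj_mult_self_eq_0)
  hence fe: "f * e = e * f * e" by (simp add: w_def)
  hence "adj (f * e) = adj (e * f * e)" by simp
  hence "e * f = e * f * e" using e f by (simp add: adj_mult mult.assoc)
  with fe show ?thesis by (simp add: e_def f_def)
qed

section \<open>Invertibility and the spectrum\<close>

lemma invertible_elI: "a * b = 1 \<Longrightarrow> b * a = 1 \<Longrightarrow> invertible_el (a::'a::cstar_algebra)"
  unfolding invertible_el_def by blast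

lemma invertible_el_1: "invertible_el (1::'a::cstar_algebra)"
  by (rule invertible_elI[of 1 1]) simp_all

lemma invertible_el_mult:
  assumes "invertible_el (a::'a::cstar_algebra)" "invertible_el b"
  shows "invertible_el (a * b)"
proof -
  obtain a' where a: "a * a' = 1" "a' * a = 1" using assms(1) by (auto simp: invertible_el_def)
  obtain b' where b: "b * b' = 1" "b' * b = 1" using assms(2) by (auto simp: invertible_el_def)
  have "(a * b) * (b' * a') = a * (b * b') * a'" "(b' * a') * (a * b) = b' * (a' * a) * b"
    by (simp_all add: mult.assoc)
  then show ?thesis using a b by (intro invertible_elI[of _ "b' * a'"]) simp_all
qed

lemma invertible_el_of_complex: "c \<noteq> 0 \<Longrightarrow> invertible_el (of_complex c :: 'a::cstar_algebra)"
  by (rule invertible_elI[of _ "of_complex (inverse c)"]) (simp_all flip: of_complex_mult)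

lemma invertible_el_minus_iff: "invertible_el (- a) \<longleftrightarrow> invertible_el (a::'a::cstar_algebra)"
  unfolding invertible_el_def by (metis minus_minus minus_mult_minus)

lemma spectrum_el_iff: "z \<in> spectrum_el a \<longleftrightarrow> \<not> invertible_el (a - of_complex z)"
  by (simp add: spectrum_el_def of_complex_def)

lemma spectrum_el_translate:
  "z \<in> spectrum_el a \<longleftrightarrow> c - z \<in> spectrum_el (of_complex c - (a::'a::cstar_algebra))"
proof -
  have "of_complex c - a - of_complex (c - z) = - (a - of_complex z :: 'a)"
    by (simp add: of_complex_diff)
  then show ?thesis by (simp only: spectrum_el_iff invertible_el_minus_iff)
qed

lemma spectrum_el_iff_not_invertible_one_minus:
  assumes z: "z \<noteq> 0"
  shows "z \<in> spectrum_el a \<longleftrightarrow> \<not> invertible_el (1 - of_complex (inverse z) * (a::'a::cstar_algebra))"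
proof -
  have "of_complex (- z) * of_complex (inverse z) = (-1::'a)"
    using z by (simp add: of_complex_minus flip: of_complex_mult)
  then have "of_complex (- z) * (1 - of_complex (inverse z) * a) = a - of_complex z"
    by (simp add: right_diff_distrib mult.assoc[symmetric] of_complex_minus)
  moreover have "of_complex (- inverse z) * (a - of_complex z) = 1 - of_complex (inverse z) * a"
    using z by (simp add: right_diff_distrib of_complex_minus flip: of_complex_mult)
  ultimately show ?thesis
    unfolding spectrum_el_iff using z
    by (metis invertible_el_mult invertible_el_of_complex inverse_nonzero_iff_nonzero neg_equal_0_iff_equal)
qed

lemma one_minus_power_eq_geometric_sum_mult: "1 - y ^ n = (\<Sum>k<n. y ^ k) * (1 - y)"
  for y :: "'a::ring_1"
proof (induct n)
  case (Suc n)
  have "1 - y ^ Suc n = (1 - y ^ n) + y ^ n * (1 - y)"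
    by (simp add: algebra_simps power_Suc2 power_commutes)
  with Suc show ?case by (simp add: algebra_simps)
qed simp

lemma invertible_el_one_minus:
  fixes y :: "'a::cstar_algebra"
  assumes "norm y < 1"
  shows "invertible_el (1 - y)"
proof -
  have "summable (\<lambda>n. y ^ n)"
    by (rule summable_comparison_test[where g="\<lambda>n. norm y ^ n"])
       (auto intro: norm_power_ineq summable_geometric simp: assms)
  then obtain s where s: "(\<lambda>n. y ^ n) sums s" by blast
  have tel: "(\<lambda>n. y ^ n - y ^ Suc n) sums 1"
    using telescope_sums'[OF LIMSEQ_power_zero[OF assms]] by simp
  have left: "(\<lambda>n. (1 - y) * y ^ n) = (\<lambda>n. y ^ n - y ^ Suc n)"
    by (simp add: algebra_simps)
  have right: "(\<lambda>n. y ^ n * (1 - y)) = (\<lambda>n. y ^ n - y ^ Suc n)"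
    by (simp add: algebra_simps power_commutes)
  have "(1 - y) * s = 1" using sums_mult[OF s, of "1 - y"] tel unfolding left by (rule sums_unique2)
  moreover have "s * (1 - y) = 1" using sums_mult2[OF s, of "1 - y"] tel unfolding right by (rule sums_unique2)
  ultimately show ?thesis by (rule invertible_elI)
qed

lemma spectrum_el_norm_le:
  assumes "z \<in> spectrum_el (a::'a::cstar_algebra)"
  shows "cmod z \<le> norm a"
proof (rule ccontr)
  assume "\<not> cmod z \<le> norm a"
  hence lt: "norm a < cmod z" and z: "z \<noteq> 0" by auto
  have "norm (of_complex (inverse z) * a) = norm a / cmod z"
    by (simp add: norm_of_complex_mult norm_inverse divide_inverse mult.commute)
  also have "\<dots> < 1" using lt z by simp
  finally have "norm (of_complex (inverse z) * (a::'a)) < 1" .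
  hence "invertible_el (1 - of_complex (inverse z) * a)" by (rule invertible_el_one_minus)
  with assms z show False by (simp add: spectrum_el_iff_not_invertible_one_minus)
qed

lemma spectrum_el_self_adjoint_real:
  fixes s :: "'a::cstar_algebra"
  assumes sa: "adj s = s" and z: "z \<in> spectrum_el s"
  shows "Im z = 0"
proof (rule ccontr)
  assume nz: "Im z \<noteq> 0"
  \<comment> \<open>\<open>\<bar>z + i t\<bar>\<^sup>2 \<le> \<parallel>s + i t\<parallel>\<^sup>2 \<le> \<parallel>s\<parallel>\<^sup>2 + t\<^sup>2\<close> for all real \<open>t\<close> leaves no room for the term \<open>2 t Im z\<close>\<close>
  have key: "2 * Im z * t \<le> norm s ^ 2" for t :: real
  proof -
    define it where "it = \<i> * complex_of_real t"
    have eq: "s + of_complex it - of_complex (z + it) = s - of_complex z" by (simp add: of_complex_add)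
    have "z + it \<in> spectrum_el (s + of_complex it)" using z unfolding spectrum_el_iff eq .
    hence b: "cmod (z + it) \<le> norm (s + of_complex it)" by (rule spectrum_el_norm_le)
    have it_sq: "- it * it = complex_of_real (t ^ 2)" by (simp add: it_def power2_eq_square complex_eq_iff)
    have "adj (s + of_complex it) * (s + of_complex it)
        = s * s + (of_complex (- it) * s + s * of_complex it) + of_complex (- it) * of_complex it"
      by (simp add: adj_add sa adj_of_complex it_def algebra_simps)
    also have "of_complex (- it) * s + s * of_complex it = 0"
      by (simp add: of_complex_minus of_complex_commute[of it s])
    also have "of_complex (- it) * of_complex it = (of_complex (complex_of_real (t ^ 2)) :: 'a)"
      using it_sq by (simp flip: of_complex_mult)
    finally have "norm (s + of_complex it) ^ 2 = norm (s * s + of_complex (complex_of_real (t ^ 2)))"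
      by (simp flip: norm_adj_mult_self)
    also have "\<dots> \<le> norm (s * s) + t ^ 2"
      by (rule order.trans[OF norm_triangle_ineq]) (simp add: norm_of_complex norm_power)
    also have "norm (s * s) = norm s ^ 2" by (metis norm_adj_mult_self sa)
    finally have "(cmod (z + it)) ^ 2 \<le> norm s ^ 2 + t ^ 2"
      using b by (meson norm_ge_zero order_trans power_mono)
    moreover have "(cmod (z + it)) ^ 2 = Re z ^ 2 + (Im z + t) ^ 2" by (simp add: cmod_power2 it_def)
    ultimately have "Re z ^ 2 + Im z ^ 2 + 2 * Im z * t \<le> norm s ^ 2" by (simp add: power2_sum)
    then show ?thesis using zero_le_power2[of "Re z"] zero_le_power2[of "Im z"] by linarith
  qed
  have "2 * Im z * ((norm s ^ 2 + 1) / (2 * Im z)) \<le> norm s ^ 2" by (rule key)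
  thus False using nz by simp
qed

lemma positive_el_1: "positive_el (1::'a::cstar_algebra)"
proof -
  have "z = 1" if z: "z \<in> spectrum_el (1::'a)" for z
  proof (rule ccontr)
    assume "z \<noteq> 1"
    hence "invertible_el (of_complex (1 - z) :: 'a)" by (intro invertible_el_of_complex) auto
    with z show False by (simp add: spectrum_el_iff of_complex_diff)
  qed
  then show ?thesis unfolding positive_el_def using Reals_1 by fastforce
qed

section \<open>Norm and spectrum of self-adjoint elements\<close>

definition unit_root :: "nat \<Rightarrow> complex" where
  "unit_root N = cis (2 * pi / real N)"

lemma norm_unit_root [simp]: "cmod (unit_root N) = 1"
  by (simp add: unit_root_def)

lemma unit_root_power_self [simp]:
  assumes "N \<ge> 1"
  shows "unit_root N ^ N = 1"
proof -
  have "unit_root N ^ N = cis (real N * (2 * pi / real N))" by (simp only: unit_root_def DeMoivre)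
  with assms show ?thesis by simp
qed

lemma unit_root_power_neq_1:
  assumes "0 < k" "k < N"
  shows "unit_root N ^ k \<noteq> 1"
proof
  assume "unit_root N ^ k = 1"
  hence "cis (2 * pi * real k / real N) = 1" by (simp add: unit_root_def DeMoivre mult_ac)
  then obtain m :: int where "2 * pi * real k / real N = 2 * pi * of_int m"
    by (auto simp: complex_eq_iff cos_one_2pi_int)
  hence "int k = int N * m" using assms by (simp add: field_simps) (metis of_int_eq_iff of_int_mult of_int_of_nat_eq)
  hence "N dvd k" by (metis dvd_triv_left int_dvd_int_iff)
  with assms show False by (simp add: nat_dvd_not_less)
qed

lemma sum_unit_root_powers:
  assumes "0 < k" "k < N"
  shows "(\<Sum>j<N. (unit_root N ^ k) ^ j) = 0"
proof -
  have "(unit_root N ^ k) ^ N = 1" using assms by (simp flip: power_mult add: mult.commute power_mult)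
  then show ?thesis using unit_root_power_neq_1[OF assms] by (simp add: geometric_sum)
qed

lemma sum_scaled_unit_root_powers:
  assumes "k < N"
  shows "(\<Sum>j<N. (c * unit_root N ^ j) ^ k) = (if k = 0 then of_nat N else 0)"
proof (cases "k = 0")
  case False
  have "(\<Sum>j<N. (c * unit_root N ^ j) ^ k) = c ^ k * (\<Sum>j<N. (unit_root N ^ k) ^ j)"
    by (simp add: power_mult_distrib sum_distrib_left flip: power_mult) (simp add: mult.commute)
  also have "\<dots> = 0" using False assms by (subst sum_unit_root_powers) auto
  finally show ?thesis using False by simp
qed simp

lemma norm_cis_minus_1_le: "cmod (cis t - 1) \<le> \<bar>t\<bar>"
proof -
  have "(cmod (cis t - 1))\<^sup>2 = (cos t - 1)\<^sup>2 + (sin t)\<^sup>2"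
    by (simp add: cmod_def cis.ctr)
  also have "\<dots> = 4 * (sin (t/2))\<^sup>2"
    using sin_cos_squared_add[of t] cos_double_sin[of "t/2"] by (simp add: power2_diff algebra_simps)
  also have "\<dots> \<le> 4 * (t/2)\<^sup>2"
    using abs_le_square_iff[THEN iffD1, OF abs_sin_x_le_abs_x[of "t/2"]] by simp
  also have "\<dots> = \<bar>t\<bar>\<^sup>2" by (simp add: power2_eq_square)
  finally show ?thesis using abs_ge_zero power2_le_imp_le by blast
qed

lemma norm_unit_root_minus_1_le: "cmod (unit_root N - 1) \<le> 2 * pi / real N"
  using norm_cis_minus_1_le[of "2 * pi / real N"] by (simp add: unit_root_def)

lemma norm_le_if_one_minus_mult_eq_1:
  fixes y z :: "'a::real_normed_algebra_1"
  assumes "(1 - y) * z = 1" and "norm (z - 1) \<le> 1/4"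
  shows "norm y \<le> 1/3"
proof -
  have "y = (z - 1) - y * (z - 1)" using assms(1) by (simp add: algebra_simps)
  then have "norm y \<le> norm (z - 1) + norm y * norm (z - 1)"
    by (metis norm_triangle_ineq4 norm_mult_ineq add_left_mono order_trans)
  also have "\<dots> \<le> 1/4 + norm y * (1/4)" using assms(2) by (intro add_mono mult_left_mono) auto
  finally show ?thesis by simp
qed

locale resolvent =
  fixes x :: "'a::cstar_algebra" and \<tau> :: real and K :: "complex \<Rightarrow> 'a"
  assumes resolvent_left: "cmod w \<le> \<tau> \<Longrightarrow> (1 - of_complex w * x) * K w = 1"
    and resolvent_right: "cmod w \<le> \<tau> \<Longrightarrow> K w * (1 - of_complex w * x) = 1"
begin

lemma resolvent_commute:
  assumes "cmod w \<le> \<tau>"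
  shows "K w * x = x * K w"
proof -
  have "x * (1 - of_complex w * x) = (1 - of_complex w * x) * x"
    by (simp add: right_diff_distrib left_diff_distrib mult.assoc of_complex_commute[of w x, symmetric]
        flip: mult.assoc[of x "of_complex w" x])
  then have "K w * x = K w * ((1 - of_complex w * x) * x * K w)"
    using resolvent_left[OF assms] by (metis mult.assoc mult_1_right)
  also have "\<dots> = (K w * (1 - of_complex w * x)) * (x * K w)" by (simp add: mult.assoc)
  finally show ?thesis using resolvent_right[OF assms] by simp
qed

lemma resolvent_0: "\<tau> \<ge> 0 \<Longrightarrow> K 0 = 1"
  using resolvent_left[of 0] by simp

lemma resolvent_diff:
  assumes w: "cmod w \<le> \<tau>" and w': "cmod w' \<le> \<tau>"
  shows "K w' - K w = of_complex (w' - w) * (x * K w' * K w)"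
proof -
  have "K w' - K w = K w' * ((1 - of_complex w * x) * K w) - (K w' * (1 - of_complex w' * x)) * K w"
    using resolvent_left[OF w] resolvent_right[OF w'] by simp
  also have "\<dots> = K w' * (of_complex (w' - w) * x) * K w"
    by (simp add: algebra_simps of_complex_diff)
  also have "\<dots> = of_complex (w' - w) * (K w' * x * K w)"
    by (metis mult_of_complex_left_commute mult.assoc)
  finally show ?thesis using resolvent_commute[OF w'] by simp
qed

lemma norm_resolvent_diff_le:
  assumes "cmod w \<le> \<tau>" "cmod w' \<le> \<tau>"
  shows "norm (K w' - K w) \<le> cmod (w' - w) * norm x * norm (K w') * norm (K w)"
  using norm_mult3_le[of x "K w'" "K w"] resolvent_diff[OF assms]
  by (simp add: norm_of_complex_mult mult.assoc mult_left_mono)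

lemma norm_resolvent_le_twice:
  assumes w: "cmod w \<le> \<tau>" and w': "cmod w' \<le> \<tau>"
    and small: "cmod (w' - w) * norm x * norm (K w) \<le> 1/2"
  shows "norm (K w') \<le> 2 * norm (K w)"
proof -
  have "norm (K w') \<le> norm (K w) + norm (K w' - K w)"
    by (metis add.commute diff_add_cancel norm_triangle_ineq)
  also have "norm (K w' - K w) \<le> (cmod (w' - w) * norm x * norm (K w)) * norm (K w')"
    using norm_resolvent_diff_le[OF w w'] by (simp add: mult_ac)
  also have "\<dots> \<le> 1/2 * norm (K w')" using small by (intro mult_right_mono) auto
  finally show ?thesis by simp
qed

lemma continuous_on_resolvent: "continuous_on (cball 0 \<tau>) K"
  unfolding continuous_on_iff
proof (intro ballI allI impI)
  fix w :: complex and e :: real assume w: "w \<in> cball 0 \<tau>" and e: "0 < e"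
  define A where "A = norm x + 1"
  define B where "B = norm (K w) + 1"
  have A: "A > 0" "norm x \<le> A" and B: "B > 0" "norm (K w) \<le> B"
    unfolding A_def B_def using norm_ge_zero[of x] norm_ge_zero[of "K w"] by linarith+
  define d where "d = min (1 / (2 * A * B)) (e / (2 * A * B * B))"
  have d: "d > 0" using A B e by (simp add: d_def)
  have "d \<le> 1 / (2 * A * B)" "d \<le> e / (2 * A * B * B)" by (simp_all add: d_def)
  then have d1: "d * (A * B) \<le> 1/2" and d2: "d * A * (2 * B) * B \<le> e"
    using A B by (simp_all add: le_divide_eq mult_ac)
  show "\<exists>d>0. \<forall>w'\<in>cball 0 \<tau>. dist w' w < d \<longrightarrow> dist (K w') (K w) < e"
  proof (intro exI[of _ d] conjI ballI impI d)
    fix w' assume w': "w' \<in> cball 0 \<tau>" and "dist w' w < d"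
    then have \<delta>: "cmod (w' - w) < d" by (simp add: dist_norm)
    have "norm x * norm (K w) \<le> A * B" using A B by (intro mult_mono) auto
    then have "cmod (w' - w) * (norm x * norm (K w)) \<le> d * (A * B)"
      using mult_mono[OF less_imp_le[OF \<delta>]] d by simp
    also have "\<dots> \<le> 1/2" by (rule d1)
    finally have "norm (K w') \<le> 2 * norm (K w)"
      using w w' by (intro norm_resolvent_le_twice) (auto simp: mult.assoc)
    then have Kw': "norm (K w') \<le> 2 * B" using B by simp
    have "norm (K w' - K w) \<le> cmod (w' - w) * norm x * norm (K w') * norm (K w)"
      using w w' by (intro norm_resolvent_diff_le) auto
    also have "\<dots> \<le> cmod (w' - w) * A * (2 * B) * B"
      using A B Kw' by (intro mult_mono mult_left_mono) auto
    also have "\<dots> < d * A * (2 * B) * B"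
      using \<delta> A B by (intro mult_strict_right_mono) auto
    also have "\<dots> \<le> e" by (rule d2)
    finally show "dist (K w') (K w) < e" by (simp add: dist_norm)
  qed
qed

lemma resolvent_bounded: "\<exists>M. \<forall>w. cmod w \<le> \<tau> \<longrightarrow> norm (K w) \<le> M"
proof -
  have "bounded (K ` cball 0 \<tau>)"
    by (intro compact_imp_bounded compact_continuous_image continuous_on_resolvent compact_cball)
  then show ?thesis unfolding bounded_iff by (meson image_eqI mem_cball_0)
qed

definition average :: "nat \<Rightarrow> real \<Rightarrow> 'a" where
  "average N t = of_complex (1 / of_nat N) * (\<Sum>j<N. K (of_real t * unit_root N ^ j))"

lemma average_0:
  assumes "N \<ge> 1" "\<tau> \<ge> 0"
  shows "average N 0 = 1"
proof -
  have "average N 0 = of_complex (1 / of_nat N) * of_complex (of_nat N)"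
    by (simp add: average_def resolvent_0[OF assms(2)] of_complex_of_nat)
  also have "\<dots> = of_complex (1 / of_nat N * of_nat N)" by (simp only: of_complex_mult)
  finally show ?thesis using assms by simp
qed

text \<open>Averaging over the \<open>N\<close>-th roots of unity keeps only the powers \<open>x ^ (k * N)\<close>
  of the geometric series of the resolvent.\<close>

lemma one_minus_power_mult_average:
  assumes N: "N \<ge> 1" and \<tau>: "\<tau> \<ge> 0"
  shows "(1 - of_complex (of_real (\<tau> ^ N)) * x ^ N) * average N \<tau> = 1"
proof -
  define a where "a j = complex_of_real \<tau> * unit_root N ^ j" for j
  have a: "cmod (a j) \<le> \<tau>" for j using \<tau> by (simp add: a_def norm_mult norm_power)
  have "a j ^ N = of_real (\<tau> ^ N)" for j
    using N by (simp add: a_def power_mult_distrib flip: power_mult) (simp add: power_mult mult.commute)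
  then have each: "(1 - of_complex (of_real (\<tau> ^ N)) * x ^ N) * K (a j) = (\<Sum>k<N. of_complex (a j ^ k) * x ^ k)"
    for j
    using one_minus_power_eq_geometric_sum_mult[of "of_complex (a j) * x" N] resolvent_left[OF a]
    by (simp add: power_of_complex_mult mult.assoc)
  have inner: "(\<Sum>j<N. a j ^ k) = (if k = 0 then of_nat N else 0)" if "k < N" for k
    unfolding a_def by (rule sum_scaled_unit_root_powers[OF that])
  have "(\<Sum>j<N. (1 - of_complex (of_real (\<tau> ^ N)) * x ^ N) * K (a j))
      = (\<Sum>j<N. \<Sum>k<N. of_complex (a j ^ k) * x ^ k)"
    by (rule sum.cong[OF refl each])
  also have "\<dots> = (\<Sum>k<N. \<Sum>j<N. of_complex (a j ^ k) * x ^ k)" by (rule sum.swap)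
  also have "\<dots> = (\<Sum>k<N. of_complex (\<Sum>j<N. a j ^ k) * x ^ k)"
    by (simp add: of_complex_sum sum_distrib_right)
  also have "\<dots> = (\<Sum>k<N. if k = 0 then of_complex (of_nat N) else 0)"
    by (intro sum.cong refl) (simp add: inner)
  also have "\<dots> = of_complex (of_nat N)" using N by simp
  finally have sum: "(\<Sum>j<N. (1 - of_complex (of_real (\<tau> ^ N)) * x ^ N) * K (a j)) = of_complex (of_nat N)" .
  have "(1 - of_complex (of_real (\<tau> ^ N)) * x ^ N) * average N \<tau>
      = of_complex (1 / of_nat N) * (\<Sum>j<N. (1 - of_complex (of_real (\<tau> ^ N)) * x ^ N) * K (a j))"
    by (simp only: average_def a_def mult_of_complex_left_commute sum_distrib_left)
  also have "\<dots> = of_complex (1 / of_nat N * of_nat N)" by (simp only: sum of_complex_mult)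
  finally show ?thesis using N by simp
qed

context
  fixes M :: real
  assumes bound: "\<And>w. cmod w \<le> \<tau> \<Longrightarrow> norm (K w) \<le> M" and \<tau>_nonneg: "0 \<le> \<tau>"
begin

lemma bound_nonneg: "0 \<le> M"
  using bound[of 0] \<tau>_nonneg by (simp add: order_trans[OF norm_ge_zero])

lemma norm_resolvent_second_order_le:
  assumes w: "cmod w \<le> \<tau>" and w': "cmod w' \<le> \<tau>"
  shows "norm (K w' - K w - of_complex (w' - w) * (x * K w * K w))
           \<le> norm x ^ 2 * M ^ 3 * (cmod (w' - w))\<^sup>2"
proof -
  define d where "d = w' - w"
  have "K w' - K w - of_complex d * (x * K w * K w)
      = of_complex d * (x * K w' * K w) - of_complex d * (x * K w * K w)"
    using resolvent_diff[OF w w'] by (simp add: d_def)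
  also have "\<dots> = of_complex d * (x * (K w' - K w) * K w)"
    by (simp add: right_diff_distrib left_diff_distrib mult.assoc)
  also have "x * (K w' - K w) * K w = of_complex d * (x * (x * K w' * K w) * K w)"
    using resolvent_diff[OF w w']
    by (simp add: d_def mult_of_complex_left_commute mult.assoc[of _ _ "K w"])
  finally have eq: "norm (K w' - K w - of_complex d * (x * K w * K w))
                      = (cmod d)\<^sup>2 * norm (x * (x * K w' * K w) * K w)"
    by (simp add: norm_of_complex_mult power2_eq_square)
  have "norm (x * (x * K w' * K w) * K w) \<le> norm x * (norm x * norm (K w') * norm (K w)) * norm (K w)"
    by (meson norm_mult3_le mult_left_mono mult_right_mono norm_ge_zero order_trans)
  also have "\<dots> \<le> norm x * (norm x * M * M) * M"
    using bound[OF w] bound[OF w'] bound_nonneg by (intro mult_mono mult_left_mono) auto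
  finally have "norm (x * (x * K w' * K w) * K w) \<le> norm x ^ 2 * M ^ 3"
    by (simp add: power2_eq_square power3_eq_cube mult_ac)
  then show ?thesis unfolding d_def[symmetric] eq by (simp add: mult_left_mono mult.commute)
qed

text \<open>Along the closed polygon through the points \<open>t * \<zeta> ^ j\<close> the increments of the resolvent
  telescope to zero, so their first-order parts, which form the sum below, are as small as the
  second-order remainders.\<close>

lemma norm_twisted_sum_le:
  assumes N: "N \<ge> 2" and t: "0 \<le> t" "t \<le> \<tau>"
  shows "norm (\<Sum>j<N. of_complex (unit_root N ^ j) *
                 (x * K (of_real t * unit_root N ^ j) * K (of_real t * unit_root N ^ j)))
           \<le> real N * (norm x ^ 2 * M ^ 3) * t * cmod (unit_root N - 1)"
proof -
  define \<zeta> where "\<zeta> = unit_root N"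
  define C where "C = norm x ^ 2 * M ^ 3"
  define a where "a j = complex_of_real t * \<zeta> ^ j" for j
  define D where "D j = x * K (a j) * K (a j)" for j
  define S where "S = (\<Sum>j<N. of_complex (\<zeta> ^ j) * D j)"
  have a: "cmod (a j) \<le> \<tau>" for j using t by (simp add: a_def \<zeta>_def norm_mult norm_power)
  have "norm S \<le> real N * C * t * cmod (\<zeta> - 1)"
  proof (cases "t = 0")
    case True
    have "S = (\<Sum>j<N. of_complex (\<zeta> ^ j)) * (x * K 0 * K 0)"
      using True by (simp add: S_def D_def a_def sum_distrib_right)
    also have "(\<Sum>j<N. of_complex (\<zeta> ^ j)) = (of_complex (\<Sum>j<N. (\<zeta> ^ 1) ^ j) :: 'a)"
      by (simp add: of_complex_sum)
    also have "\<dots> = 0" using N sum_unit_root_powers[of 1 N] by (simp add: \<zeta>_def)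
    finally show ?thesis using True by simp
  next
    case False
    define e where "e j = K (a (Suc j)) - K (a j) - of_complex (a (Suc j) - a j) * D j" for j
    have da: "a (Suc j) - a j = (complex_of_real t * (\<zeta> - 1)) * \<zeta> ^ j" for j
      by (simp add: a_def algebra_simps)
    have "cmod (a (Suc j) - a j) = t * cmod (\<zeta> - 1)" for j
      using t by (simp add: da \<zeta>_def norm_mult norm_power)
    then have e: "norm (e j) \<le> C * (t * cmod (\<zeta> - 1))\<^sup>2" for j
      using norm_resolvent_second_order_le[OF a[of j] a[of "Suc j"]] by (simp add: e_def D_def C_def)
    have tel: "(\<Sum>j<N. K (a (Suc j)) - K (a j)) = 0"
      using N by (simp only: sum_lessThan_telescope[of "\<lambda>j. K (a j)"]) (simp add: a_def \<zeta>_def)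
    have "(\<Sum>j<N. K (a (Suc j)) - K (a j))
        = (\<Sum>j<N. of_complex (complex_of_real t * (\<zeta> - 1)) * (of_complex (\<zeta> ^ j) * D j) + e j)"
      by (intro sum.cong refl) (simp add: e_def da of_complex_mult mult.assoc)
    also have "\<dots> = of_complex (complex_of_real t * (\<zeta> - 1)) * S + (\<Sum>j<N. e j)"
      by (simp add: sum.distrib S_def sum_distrib_left)
    finally have "of_complex (complex_of_real t * (\<zeta> - 1)) * S = - (\<Sum>j<N. e j)"
      using tel by (simp add: eq_neg_iff_add_eq_0)
    hence "t * cmod (\<zeta> - 1) * norm S = norm (\<Sum>j<N. e j)"
      using t by (metis norm_of_complex_mult norm_minus_cancel norm_mult norm_of_real abs_of_nonneg)
    also have "\<dots> \<le> (\<Sum>j<N. C * (t * cmod (\<zeta> - 1))\<^sup>2)"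
      by (intro order.trans[OF norm_sum] sum_mono e)
    also have "\<dots> = (t * cmod (\<zeta> - 1)) * (real N * C * t * cmod (\<zeta> - 1))"
      by (simp add: power2_eq_square mult_ac)
    finally show ?thesis
      using False t N unit_root_power_neq_1[of 1 N] by (simp add: \<zeta>_def mult_le_cancel_left_pos)
  qed
  then show ?thesis by (simp add: S_def D_def a_def C_def \<zeta>_def)
qed

lemma norm_average_diff_le:
  assumes N: "N \<ge> 2" and t: "0 \<le> t" "t \<le> t'" "t' \<le> \<tau>"
  shows "norm (average N t' - average N t)
           \<le> (t' - t) * (norm x ^ 2 * M ^ 3 * t * cmod (unit_root N - 1))
             + norm x ^ 2 * M ^ 3 * (t' - t)\<^sup>2"
proof -
  define \<zeta> where "\<zeta> = unit_root N"
  define C where "C = norm x ^ 2 * M ^ 3"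
  define a where "a j = complex_of_real t * \<zeta> ^ j" for j
  define b where "b j = complex_of_real t' * \<zeta> ^ j" for j
  define D where "D j = x * K (a j) * K (a j)" for j
  define S where "S = (\<Sum>j<N. of_complex (\<zeta> ^ j) * D j)"
  define f where "f j = K (b j) - K (a j) - of_complex (b j - a j) * D j" for j
  have a: "cmod (a j) \<le> \<tau>" and b: "cmod (b j) \<le> \<tau>" for j
    using t by (simp_all add: a_def b_def \<zeta>_def norm_mult norm_power)
  have S: "norm S \<le> real N * C * t * cmod (\<zeta> - 1)"
    using norm_twisted_sum_le[OF N t(1)] t by (simp add: S_def D_def a_def C_def \<zeta>_def)
  have ba: "b j - a j = complex_of_real (t' - t) * \<zeta> ^ j" for j
    by (simp add: a_def b_def algebra_simps)
  have "cmod (b j - a j) = t' - t" for j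
    using t by (simp add: ba \<zeta>_def norm_mult norm_power del: of_real_diff)
  then have f: "norm (f j) \<le> C * (t' - t)\<^sup>2" for j
    using norm_resolvent_second_order_le[OF a[of j] b[of j]] by (simp add: f_def D_def C_def)
  have "(\<Sum>j<N. K (b j) - K (a j))
      = (\<Sum>j<N. of_complex (complex_of_real (t' - t)) * (of_complex (\<zeta> ^ j) * D j) + f j)"
    by (intro sum.cong refl) (simp add: f_def ba of_complex_mult mult.assoc)
  also have "\<dots> = of_complex (complex_of_real (t' - t)) * S + (\<Sum>j<N. f j)"
    by (simp add: sum.distrib S_def sum_distrib_left)
  finally have "norm (\<Sum>j<N. K (b j) - K (a j)) \<le> (t' - t) * norm S + (\<Sum>j<N. norm (f j))"
    using t by (simp add: norm_of_complex_mult order.trans[OF norm_triangle_ineq] add_mono norm_sum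
        del: of_real_diff)
  also have "\<dots> \<le> (t' - t) * (real N * C * t * cmod (\<zeta> - 1)) + (\<Sum>j<N. C * (t' - t)\<^sup>2)"
    using t by (intro add_mono mult_left_mono S sum_mono f) auto
  finally have sum: "norm (\<Sum>j<N. K (b j) - K (a j))
      \<le> real N * ((t' - t) * (C * t * cmod (\<zeta> - 1)) + C * (t' - t)\<^sup>2)"
    by (simp add: algebra_simps)
  have "norm (average N t' - average N t) = norm (\<Sum>j<N. K (b j) - K (a j)) / real N"
    by (simp add: average_def a_def b_def \<zeta>_def norm_of_complex_mult norm_divide
        flip: right_diff_distrib sum_subtractf)
  also have "\<dots> \<le> (t' - t) * (C * t * cmod (\<zeta> - 1)) + C * (t' - t)\<^sup>2"
    using sum N by (simp add: divide_le_eq mult.commute)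
  finally show ?thesis by (simp add: C_def \<zeta>_def)
qed

lemma norm_average_minus_1_le:
  assumes N: "N \<ge> 2"
  shows "norm (average N \<tau> - 1)
           \<le> norm x ^ 2 * M ^ 3 * \<tau>\<^sup>2 * cmod (unit_root N - 1) + norm x ^ 2 * M ^ 3 * \<tau>\<^sup>2 / real N"
proof -
  define C where "C = norm x ^ 2 * M ^ 3"
  define c where "c = cmod (unit_root N - 1)"
  have C: "C \<ge> 0" using bound_nonneg by (simp add: C_def)
  have N_pos: "real N > 0" using N by simp
  define s where "s i = \<tau> * real i / real N" for i
  have s_step: "s (Suc i) - s i = \<tau> / real N" for i using N_pos by (simp add: s_def field_simps)
  have s_le: "s i \<le> \<tau>" if "i \<le> N" for i
    using that \<tau>_nonneg N_pos by (simp add: s_def divide_le_eq mult_left_mono)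
  have s_nonneg: "s i \<ge> 0" for i using \<tau>_nonneg by (simp add: s_def)
  have "average N \<tau> - 1 = (\<Sum>i<N. average N (s (Suc i)) - average N (s i))"
    using sum_lessThan_telescope[of "\<lambda>i. average N (s i)" N] average_0[of N] N \<tau>_nonneg N_pos
    by (simp add: s_def)
  then have "norm (average N \<tau> - 1) \<le> (\<Sum>i<N. norm (average N (s (Suc i)) - average N (s i)))"
    by (simp add: norm_sum)
  also have "\<dots> \<le> (\<Sum>i<N. (\<tau> / real N) * (C * \<tau> * c) + C * (\<tau> / real N)\<^sup>2)"
  proof (intro sum_mono)
    fix i assume i: "i \<in> {..<N}"
    have "0 \<le> \<tau> / real N" using \<tau>_nonneg by simp
    then have "s i \<le> s (Suc i)" using s_step[of i] by linarith
    then have "norm (average N (s (Suc i)) - average N (s i))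
        \<le> (s (Suc i) - s i) * (C * s i * c) + C * (s (Suc i) - s i)\<^sup>2"
      using norm_average_diff_le[OF N s_nonneg _ s_le[of "Suc i"]] i by (simp add: C_def c_def)
    also have "\<dots> \<le> (\<tau> / real N) * (C * \<tau> * c) + C * (\<tau> / real N)\<^sup>2"
      unfolding s_step using s_le[of i] i \<tau>_nonneg N_pos C
      by (intro add_mono mult_left_mono mult_right_mono) (auto simp: c_def)
    finally show "norm (average N (s (Suc i)) - average N (s i))
        \<le> (\<tau> / real N) * (C * \<tau> * c) + C * (\<tau> / real N)\<^sup>2" .
  qed
  also have "\<dots> = C * \<tau>\<^sup>2 * c + C * \<tau>\<^sup>2 / real N"
    using N_pos by (simp add: field_simps power2_eq_square)
  finally show ?thesis by (simp add: C_def c_def)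
qed

end

lemma eventually_norm_power_le_half:
  assumes \<tau>: "\<tau> > 0"
  shows "\<exists>N0. \<forall>N\<ge>N0. \<tau> ^ N * norm (x ^ N) \<le> 1/2"
proof -
  obtain M where M: "\<And>w. cmod w \<le> \<tau> \<Longrightarrow> norm (K w) \<le> M" using resolvent_bounded by blast
  define C where "C = norm x ^ 2 * M ^ 3"
  have C: "C \<ge> 0" using bound_nonneg[OF M] \<tau> by (simp add: C_def)
  define B where "B = C * \<tau>\<^sup>2 * (2 * pi + 1)"
  show ?thesis
  proof (intro exI[of _ "max 2 (nat \<lceil>4 * B\<rceil>)"] allI impI)
    fix N assume N0: "max 2 (nat \<lceil>4 * B\<rceil>) \<le> N"
    then have N: "N \<ge> 2" and N_pos: "real N > 0" by auto
    have "norm (average N \<tau> - 1) \<le> C * \<tau>\<^sup>2 * cmod (unit_root N - 1) + C * \<tau>\<^sup>2 / real N"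
      using norm_average_minus_1_le[OF M _ N] \<tau> by (simp add: C_def)
    also have "\<dots> \<le> C * \<tau>\<^sup>2 * (2 * pi / real N) + C * \<tau>\<^sup>2 / real N"
      using norm_unit_root_minus_1_le C by (intro add_mono mult_left_mono) auto
    also have "\<dots> = B / real N" using N_pos by (simp add: B_def field_simps)
    also have "\<dots> \<le> 1/4" using N0 N_pos by (simp add: divide_le_eq)
    finally have "norm (average N \<tau> - 1) \<le> 1/4" .
    moreover have "(1 - of_complex (of_real (\<tau> ^ N)) * x ^ N) * average N \<tau> = 1"
      using N \<tau> by (intro one_minus_power_mult_average) auto
    ultimately have "norm (of_complex (of_real (\<tau> ^ N)) * x ^ N) \<le> 1/3"
      by (intro norm_le_if_one_minus_mult_eq_1)
    then show "\<tau> ^ N * norm (x ^ N) \<le> 1/2"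
      using \<tau> by (simp add: norm_of_complex_mult norm_power del: of_real_power)
  qed
qed

end

lemma eventually_norm_power_le_half_of_invertible:
  fixes x :: "'a::cstar_algebra"
  assumes \<tau>: "\<tau> > 0" and inv: "\<And>w. cmod w \<le> \<tau> \<Longrightarrow> invertible_el (1 - of_complex w * x)"
  shows "\<exists>N0. \<forall>N\<ge>N0. \<tau> ^ N * norm (x ^ N) \<le> 1/2"
proof -
  define K where "K w = (SOME k. (1 - of_complex w * x) * k = 1 \<and> k * (1 - of_complex w * x) = 1)"
    for w
  have "(1 - of_complex w * x) * K w = 1 \<and> K w * (1 - of_complex w * x) = 1" if "cmod w \<le> \<tau>" for w
    unfolding K_def by (rule someI_ex) (use inv[OF that] in \<open>auto simp: invertible_el_def\<close>)
  then interpret resolvent x \<tau> K by unfold_locales auto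
  show ?thesis by (rule eventually_norm_power_le_half[OF \<tau>])
qed

lemma norm_le_if_spectrum_le:
  fixes e :: "'a::cstar_algebra"
  assumes sa: "adj e = e" and spec: "\<And>z. z \<in> spectrum_el e \<Longrightarrow> cmod z \<le> c" and "c \<ge> 0"
  shows "norm e \<le> c"
proof (rule ccontr)
  assume "\<not> norm e \<le> c"
  define \<tau> where "\<tau> = 2 / (c + norm e)"
  have \<tau>: "\<tau> > 0" "\<tau> * norm e > 1" "\<tau> * c < 1"
    using \<open>\<not> norm e \<le> c\<close> \<open>c \<ge> 0\<close> by (auto simp: \<tau>_def field_simps)
  have "invertible_el (1 - of_complex w * e)" if w: "cmod w \<le> \<tau>" for w
  proof (cases "w = 0")
    case False
    have "\<tau> * c < cmod w * cmod (inverse w)" using \<tau>(3) False by (simp add: norm_inverse)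
    also have "\<dots> \<le> \<tau> * cmod (inverse w)" using w by (intro mult_right_mono) auto
    finally have "inverse w \<notin> spectrum_el e" using spec \<tau>(1) by (meson linorder_not_le mult_less_cancel_left_pos)
    then show ?thesis using False by (simp add: spectrum_el_iff_not_invertible_one_minus)
  qed (simp add: invertible_el_1)
  then obtain N0 where N0: "\<forall>N\<ge>N0. \<tau> ^ N * norm (e ^ N) \<le> 1/2"
    using eventually_norm_power_le_half_of_invertible[OF \<tau>(1)] by blast
  have "N0 \<le> 2 ^ N0" by (simp add: less_imp_le)
  then have "\<tau> ^ (2 ^ N0) * norm (e ^ (2 ^ N0)) \<le> 1/2" using N0 by blast
  then have "(\<tau> * norm e) ^ (2 ^ N0) \<le> 1/2"
    by (simp add: norm_power2_self_adjoint[OF sa] power_mult_distrib)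
  moreover have "1 \<le> (\<tau> * norm e) ^ (2 ^ N0)" using \<tau>(2) by (simp add: one_le_power)
  ultimately show False by simp
qed

section \<open>Positivity of compressions\<close>

lemma le_if_power_two_powers_le_twice:
  fixes a m :: real
  assumes m: "m \<ge> 0" and le: "\<And>k. a ^ (2 ^ k) \<le> 2 * m ^ (2 ^ k)"
  shows "a \<le> m"
proof (rule ccontr)
  assume "\<not> a \<le> m"
  with m le[of 0] have mpos: "m > 0" by auto
  define r where "r = a / m"
  have r: "r > 1" using \<open>\<not> a \<le> m\<close> mpos by (simp add: r_def)
  define k where "k = nat \<lceil>1 / (r - 1)\<rceil>"
  have "1 / (r - 1) \<le> real k" unfolding k_def by linarith
  then have "1 < (real k + 1) * (r - 1)" using r by (simp add: field_simps)
  also have "\<dots> \<le> real (2 ^ k) * (r - 1)"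
  proof -
    have "real k + 1 \<le> real (2 ^ k)" by (induct k) auto
    then show ?thesis using r by (intro mult_right_mono) auto
  qed
  finally have "2 < 1 + real (2 ^ k) * (r - 1)" by simp
  also have "\<dots> \<le> r ^ (2 ^ k)"
    using Bernoulli_inequality[of "r - 1" "2 ^ k"] r by simp
  also have "\<dots> \<le> 2" using le[of k] mpos by (simp add: r_def power_divide divide_le_eq)
  finally show False by simp
qed

lemma power_add_orthogonal:
  fixes X Y :: "'a::ring_1"
  assumes "X * Y = 0" "Y * X = 0" "n \<ge> 1"
  shows "(X + Y) ^ n = X ^ n + Y ^ n"
  using assms(3)
proof (induct n rule: dec_induct)
  case (step n)
  then obtain m where m: "n = Suc m" by (cases n) auto
  have "X * Y ^ n = 0" "Y * X ^ n = 0"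
    using assms(1,2) by (simp_all add: m mult.assoc[symmetric])
  with step show ?case by (simp add: algebra_simps)
qed simp

lemma norm_add_orthogonal_le:
  fixes X Y :: "'a::cstar_algebra"
  assumes sa: "adj X = X" "adj Y = Y" and orth: "X * Y = 0" "Y * X = 0"
    and "norm X \<le> m" "norm Y \<le> m"
  shows "norm (X + Y) \<le> m"
proof (rule le_if_power_two_powers_le_twice)
  show "m \<ge> 0" using assms(5) norm_ge_zero order_trans by blast
  fix k :: nat
  have "adj (X + Y) = X + Y" by (simp add: adj_add sa)
  then have "norm (X + Y) ^ (2 ^ k) = norm (X ^ (2 ^ k) + Y ^ (2 ^ k))"
    using power_add_orthogonal[OF orth, of "2 ^ k"] by (simp flip: norm_power2_self_adjoint)
  also have "\<dots> \<le> norm X ^ (2 ^ k) + norm Y ^ (2 ^ k)"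
    by (rule order.trans[OF norm_triangle_ineq]) (simp add: norm_power2_self_adjoint sa)
  also have "\<dots> \<le> m ^ (2 ^ k) + m ^ (2 ^ k)" using assms(5,6) by (intro add_mono power_mono) auto
  finally show "norm (X + Y) ^ (2 ^ k) \<le> 2 * m ^ (2 ^ k)" by simp
qed

lemma norm_norm_minus_le_if_positive_el:
  fixes a :: "'a::cstar_algebra"
  assumes "positive_el a"
  shows "norm (of_complex (complex_of_real (norm a)) - a) \<le> norm a"
proof (rule norm_le_if_spectrum_le)
  show "adj (of_complex (complex_of_real (norm a)) - a) = of_complex (complex_of_real (norm a)) - a"
    using assms by (simp add: positive_el_def adj_diff adj_of_complex)
  fix \<mu> assume "\<mu> \<in> spectrum_el (of_complex (complex_of_real (norm a)) - a)"
  then have \<mu>: "norm a - \<mu> \<in> spectrum_el a" by (simp add: spectrum_el_translate[of _ a "norm a"])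
  then have "Im \<mu> = 0" "Re \<mu> \<le> norm a" using assms by (auto simp: positive_el_def complex_is_Real_iff)
  moreover have "\<bar>norm a - Re \<mu>\<bar> \<le> norm a"
    using spectrum_el_norm_le[OF \<mu>] \<open>Im \<mu> = 0\<close> by (simp add: cmod_def)
  ultimately show "cmod \<mu> \<le> norm a" by (simp add: cmod_def)
qed simp

lemma positive_el_if_norm_minus_le:
  fixes b :: "'a::cstar_algebra"
  assumes sa: "adj b = b" and le: "norm (of_complex (complex_of_real t) - b) \<le> t"
  shows "positive_el b"
  unfolding positive_el_def
proof (rule conjI[OF sa], intro ballI)
  fix z assume z: "z \<in> spectrum_el b"
  then have "complex_of_real t - z \<in> spectrum_el (of_complex (complex_of_real t) - b)"
    using spectrum_el_translate by blast
  then have "cmod (complex_of_real t - z) \<le> t"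
    using spectrum_el_norm_le le order_trans by blast
  moreover have "Im z = 0" by (rule spectrum_el_self_adjoint_real[OF sa z])
  ultimately show "z \<in> \<real> \<and> 0 \<le> Re z" by (auto simp: cmod_def complex_is_Real_iff)
qed

lemma positive_el_compression:
  fixes a v :: "'a::cstar_algebra"
  assumes a: "positive_el a" and v: "projection_el v"
  shows "positive_el (v * a * v)"
proof (rule positive_el_if_norm_minus_le)
  have sa: "adj a = a" and vv: "v * v = v" "adj v = v"
    using a v by (auto simp: positive_el_def projection_el_def)
  then show "adj (v * a * v) = v * a * v" by (simp add: adj_mult mult.assoc)
  define t :: 'a where "t = of_complex (complex_of_real (norm a))"
  \<comment> \<open>\<open>t - v a v\<close> splits into the orthogonal parts \<open>t (1 - v)\<close> and \<open>v (t - a) v\<close>\<close>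
  define X where "X = t * (1 - v)"
  define Y where "Y = v * (t - a) * v"
  have vt: "v * t = t * v" by (simp add: t_def of_complex_commute)
  have vt': "v * (t * y) = t * (v * y)" for y by (metis mult.assoc vt)
  have v1: "(1 - v) * v = 0" "v * (1 - v) = 0" by (simp_all add: algebra_simps vv)
  have "X * Y = t * ((1 - v) * v) * ((t - a) * v)" "Y * X = v * (t - a) * t * (v * (1 - v))"
    by (simp_all add: X_def Y_def mult.assoc vt')
  then have "X * Y = 0" "Y * X = 0" by (simp_all add: v1)
  moreover have "adj X = X" "adj Y = Y"
  proof -
    have tsa: "adj t = t" by (simp add: t_def adj_of_complex)
    have "adj X = (1 - v) * t" by (simp add: X_def adj_mult adj_diff tsa vv)
    then show "adj X = X" by (simp add: X_def algebra_simps vt)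
    show "adj Y = Y" by (simp add: Y_def adj_mult adj_diff tsa sa vv mult.assoc)
  qed
  moreover have "norm X \<le> norm a"
    using projection_el_norm_le[OF projection_el_one_minus[OF v]]
    by (simp add: X_def t_def norm_of_complex_mult mult_left_le)
  moreover have "norm Y \<le> norm a"
  proof -
    have "norm Y \<le> norm v * norm (t - a) * norm v" unfolding Y_def by (rule norm_mult3_le)
    also have "\<dots> \<le> 1 * norm a * 1"
      using projection_el_norm_le[OF v] norm_norm_minus_le_if_positive_el[OF a]
      by (intro mult_mono) (auto simp: t_def)
    finally show ?thesis by simp
  qed
  ultimately have "norm (X + Y) \<le> norm a" by (intro norm_add_orthogonal_le)
  moreover have "X + Y = t - v * a * v"
  proof -
    have "v * (v * y) = v * y" for y by (metis mult.assoc vv(1))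
    then show ?thesis by (simp add: X_def Y_def algebra_simps vt' mult.assoc vv)
  qed
  ultimately show "norm (t - v * a * v) \<le> norm a" by simp
qed

section \<open>Maps implemented by a partial isometry\<close>

lemma compression_minus_inverse:
  fixes u A Y :: "'c::cstar_algebra"
  assumes u: "partial_isometry u" and z: "z \<noteq> 0"
    and Y1: "(u * adj u * A * (u * adj u) - of_complex z) * Y = 1"
    and Y2: "Y * (u * adj u * A * (u * adj u) - of_complex z) = 1"
  shows "(adj u * A * u - of_complex z) * (adj u * Y * u - of_complex (inverse z) * (1 - adj u * u)) = 1"
    and "(adj u * Y * u - of_complex (inverse z) * (1 - adj u * u)) * (adj u * A * u - of_complex z) = 1"
proof -
  define Q where "Q = u * adj u"
  define P where "P = adj u * u"
  define X where "X = adj u * A * u"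
  define W where "W = adj u * Y * u"
  define c :: 'c where "c = of_complex z"
  define d :: 'c where "d = of_complex (inverse z)"
  have cd: "c * d = 1" "d * c = 1" using z by (simp_all add: c_def d_def flip: of_complex_mult)
  have c_left: "y * (c * w) = c * (y * w)" and d_left: "y * (d * w) = d * (y * w)"
    and c_right: "y * c = c * y" and d_right: "y * d = d * y" for y w
    by (simp_all add: c_def d_def mult_of_complex_left_commute of_complex_commute[of _ y])
  have cd': "c * (d * y) = y" "d * (c * y) = y" for y using cd by (simp_all flip: mult.assoc)
  note uP = partial_isometry_mult_adj_mult[OF u] and Pu = partial_isometry_adj_mult_adj[OF u]
  have uQ: "adj u * (u * (adj u * y)) = adj u * y" and Qu: "u * (adj u * (u * y)) = u * y" for y
    using uP Pu by (simp_all flip: mult.assoc)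
  have XP: "X * P = X" and PX: "P * X = X" by (simp_all add: X_def P_def mult.assoc uP Pu uQ Qu)
  have QY: "Q * A * Q * Y = 1 + c * Y" and YQ: "Y * (Q * A * Q) = 1 + c * Y"
    using Y1 Y2 by (simp_all add: Q_def c_def algebra_simps of_complex_commute[of z Y])
  have "X * W = adj u * (Q * A * Q * Y) * u" "W * X = adj u * (Y * (Q * A * Q)) * u"
    by (simp_all add: X_def W_def Q_def mult.assoc uP uQ Qu)
  then have XW: "X * W = P + c * W" and WX: "W * X = P + c * W"
    unfolding QY YQ by (simp_all add: W_def P_def distrib_left distrib_right c_left[of "adj u"] mult.assoc)
  have "(X - c) * (W - d * (1 - P)) = 1" "(W - d * (1 - P)) * (X - c) = 1"
    by (simp_all add: algebra_simps XW WX cd cd' XP PX c_right[of W] c_right[of P] d_right[of X] d_left[of X])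
  then show "(adj u * A * u - of_complex z) * (adj u * Y * u - of_complex (inverse z) * (1 - adj u * u)) = 1"
    and "(adj u * Y * u - of_complex (inverse z) * (1 - adj u * u)) * (adj u * A * u - of_complex z) = 1"
    by (simp_all only: X_def W_def c_def d_def P_def)
qed

locale star_embedding =
  fixes \<sigma> :: "'a::cstar_algebra \<Rightarrow> 'c::cstar_algebra"
  assumes unital_injective_star_hom: "unital_injective_star_hom \<sigma>"
begin

lemma hom_mult: "\<sigma> (a * b) = \<sigma> a * \<sigma> b"
  and hom_1: "\<sigma> 1 = 1"
  and hom_adj: "\<sigma> (adj a) = adj (\<sigma> a)"
  and hom_add: "\<sigma> (a + b) = \<sigma> a + \<sigma> b"
  and hom_scaleC: "\<sigma> (scaleC c a) = scaleC c (\<sigma> a)"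
  and hom_eq_iff: "\<sigma> a = \<sigma> b \<longleftrightarrow> a = b"
  using unital_injective_star_hom
  by (auto simp: unital_injective_star_hom_def clinear_map_def inj_eq)

lemma hom_diff: "\<sigma> (a - b) = \<sigma> a - \<sigma> b"
  using hom_add[of "a - b" b] by (simp add: eq_diff_eq)

lemma hom_of_complex: "\<sigma> (of_complex c) = of_complex c"
  using hom_scaleC[of c 1] by (simp add: of_complex_def hom_1)

end

definition dual_map :: "('a::cstar_algebra \<Rightarrow> 'c::cstar_algebra) \<Rightarrow> 'c \<Rightarrow> 'a \<Rightarrow> 'a" where
  "dual_map \<sigma> u a = inv \<sigma> (adj u * \<sigma> a * u)"

locale implemented_map = star_embedding \<sigma> for \<sigma> :: "'a::cstar_algebra \<Rightarrow> 'c::cstar_algebra" +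
  fixes u :: 'c and V :: "'a \<Rightarrow> 'a"
  assumes partial_isometry: "partial_isometry u"
    and implemented: "\<sigma> (V a) = u * \<sigma> a * adj u"
    and adj_compression_in_range: "adj u * \<sigma> a * u \<in> range \<sigma>"
begin

abbreviation H :: "'a \<Rightarrow> 'a" where
  "H \<equiv> dual_map \<sigma> u"

lemma hom_dual_map: "\<sigma> (H a) = adj u * \<sigma> a * u"
  unfolding dual_map_def using adj_compression_in_range[of a] by (rule f_inv_into_f)

lemma u_adj_u: "u * (adj u * u) = u" "u * (adj u * (u * y)) = u * y"
  using partial_isometry_mult_adj_mult[OF partial_isometry] by (simp_all flip: mult.assoc)

lemma adj_u_adj: "adj u * (u * adj u) = adj u" "adj u * (u * (adj u * y)) = adj u * y"
  using partial_isometry_adj_mult_adj[OF partial_isometry] by (simp_all flip: mult.assoc)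

lemmas hom_simps = hom_dual_map implemented hom_mult hom_1 mult.assoc u_adj_u adj_u_adj

lemma V_dual_V: "V (H (V a)) = V a"
  and dual_V_dual: "H (V (H a)) = H a"
  and dual_V: "H (V a) = H 1 * a * H 1"
  and V_dual: "V (H a) = V 1 * a * V 1"
  by (simp_all add: hom_eq_iff[symmetric] hom_simps)

lemma V_mult_if_dual_range: "a \<in> range H \<or> b \<in> range H \<Longrightarrow> V (a * b) = V a * V b"
  and dual_mult_if_V_range: "a \<in> range V \<or> b \<in> range V \<Longrightarrow> H (a * b) = H a * H b"
  by (auto simp: hom_eq_iff[symmetric] hom_simps)

lemma projection_el_V_1: "projection_el (V 1)"
  using partial_isometry_adj[OF partial_isometry]
  by (simp add: projection_el_def partial_isometry_def hom_eq_iff[symmetric] hom_mult hom_adj implemented hom_1)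

lemma dual_add: "H (a + b) = H a + H b"
  by (simp add: hom_eq_iff[symmetric] hom_dual_map hom_add algebra_simps)

lemma dual_scaleC: "H (scaleC c a) = scaleC c (H a)"
  by (simp add: hom_eq_iff[symmetric] hom_dual_map scaleC_conv_of_complex hom_mult hom_of_complex
      mult.assoc mult_of_complex_left_commute[of "adj u"])

lemma dual_adj: "adj (H a) = H (adj a)"
  by (simp add: hom_eq_iff[symmetric] hom_adj hom_dual_map adj_mult mult.assoc)

lemma spectrum_el_dual:
  assumes "z \<in> spectrum_el (H a)"
  shows "z = 0 \<or> z \<in> spectrum_el (V 1 * a * V 1)"
proof (rule disjCI)
  assume "z \<notin> spectrum_el (V 1 * a * V 1)"
  then obtain y where y: "(V 1 * a * V 1 - of_complex z) * y = 1" "y * (V 1 * a * V 1 - of_complex z) = 1"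
      by (auto simp: spectrum_el_iff invertible_el_def)
  show "z = 0"
  proof (rule ccontr)
    assume z: "z \<noteq> 0"
    have "(u * adj u * \<sigma> a * (u * adj u) - of_complex z) * \<sigma> y = 1"
         "\<sigma> y * (u * adj u * \<sigma> a * (u * adj u) - of_complex z) = 1"
      using arg_cong[OF y(1), of \<sigma>] arg_cong[OF y(2), of \<sigma>]
      by (simp_all add: hom_mult hom_diff hom_of_complex implemented hom_1)
    note inv = compression_minus_inverse[OF partial_isometry z this]
    define g where "g = H y - of_complex (inverse z) * (1 - H 1)"
    have "\<sigma> g = adj u * \<sigma> y * u - of_complex (inverse z) * (1 - adj u * u)"
      and "\<sigma> (H a - of_complex z) = adj u * \<sigma> a * u - of_complex z"
      by (simp_all add: g_def hom_diff hom_mult hom_of_complex hom_1 hom_dual_map)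
    then have "(H a - of_complex z) * g = 1" "g * (H a - of_complex z) = 1"
      by (simp_all add: hom_eq_iff[symmetric] hom_mult inv hom_1)
    then show False using assms by (auto simp: spectrum_el_iff intro: invertible_elI)
  qed
qed

lemma positive_el_dual:
  assumes a: "positive_el a"
  shows "positive_el (H a)"
proof -
  have "positive_el (V 1 * a * V 1)" by (rule positive_el_compression[OF a projection_el_V_1])
  then have "z \<in> \<real> \<and> 0 \<le> Re z" if "z \<in> spectrum_el (H a)" for z
    using spectrum_el_dual[OF that] by (auto simp: positive_el_def)
  moreover have "adj (H a) = H a" using a by (simp add: positive_el_def dual_adj)
  ultimately show ?thesis by (simp add: positive_el_def)
qed

lemma norm_dual_le: "norm (H a) \<le> norm a"
proof -
  define b where "b = adj a * V 1 * a"
  have eq: "adj (H a) * H a = H b"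
    by (simp add: b_def hom_eq_iff[symmetric] hom_adj hom_dual_map hom_mult implemented hom_1
        adj_mult mult.assoc)
  have "norm (V 1 * b * V 1) \<le> norm (V 1) * (norm (adj a) * norm (V 1) * norm a) * norm (V 1)"
    unfolding b_def by (meson norm_mult3_le mult_left_mono mult_right_mono norm_ge_zero order_trans)
  also have "\<dots> \<le> 1 * (norm a * 1 * norm a) * 1"
    using projection_el_norm_le[OF projection_el_V_1] by (intro mult_mono) (auto simp: norm_adj)
  finally have b: "norm (V 1 * b * V 1) \<le> norm a ^ 2" by (simp add: power2_eq_square)
  have "norm (adj (H a) * H a) \<le> norm a ^ 2"
  proof (rule norm_le_if_spectrum_le)
    fix z assume "z \<in> spectrum_el (adj (H a) * H a)"
    then have "z = 0 \<or> z \<in> spectrum_el (V 1 * b * V 1)" unfolding eq by (rule spectrum_el_dual)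
    then show "cmod z \<le> norm a ^ 2"
    proof
      assume "z \<in> spectrum_el (V 1 * b * V 1)"
      then have "cmod z \<le> norm (V 1 * b * V 1)" by (rule spectrum_el_norm_le)
      with b show ?thesis by linarith
    qed simp
  qed (simp_all add: adj_mult)
  then have "norm (H a) ^ 2 \<le> norm a ^ 2" by (simp add: norm_adj_mult_self)
  then show ?thesis by (rule power2_le_imp_le) simp
qed

lemma bounded_positive_linear_dual: "bounded_positive_linear H"
  unfolding bounded_positive_linear_def clinear_map_def bounded_map_def
  using dual_add dual_scaleC positive_el_dual norm_dual_le by (auto intro!: exI[of _ 1])

text \<open>\<open>K\<close> plays the role of \<open>\<H>\<^sub>x\<close> for an arbitrary complete interaction \<open>(\<V>, \<H>)\<close>.\<close>

context
  fixes K :: "'a \<Rightarrow> 'a"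
  assumes K_1_self_adjoint: "adj (K 1) = K 1"
    and K_V_K: "\<And>a. K (V (K a)) = K a"
    and K_V: "\<And>b. K (V b) = K 1 * b * K 1"
    and V_K: "\<And>a. V (K a) = V 1 * a * V 1"
begin

lemma source_compression_hom_eq: "adj u * u * \<sigma> (K c) * (adj u * u) = adj u * \<sigma> c * u"
proof -
  have "u * \<sigma> (K c) * adj u = u * adj u * \<sigma> c * (u * adj u)"
    by (metis V_K hom_mult implemented hom_1 mult_1_right mult_1_left)
  then have "adj u * (u * \<sigma> (K c) * adj u) * u = adj u * (u * adj u * \<sigma> c * (u * adj u)) * u"
    by simp
  then show ?thesis by (simp add: mult.assoc u_adj_u adj_u_adj)
qed

lemma hom_K_1_mult_source:
  "\<sigma> (K 1) * (adj u * u) = adj u * u" "adj u * u * \<sigma> (K 1) = adj u * u"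
proof -
  define P where "P = adj u * u"
  define k where "k = \<sigma> (K 1)"
  have k: "adj k = k" by (simp add: k_def K_1_self_adjoint flip: hom_adj)
  have P: "P * P = P" "adj P = P"
    using partial_isometry by (auto simp: P_def partial_isometry_def projection_el_def)
  have PP: "P * (P * y) = P * y" for y using P(1) by (simp flip: mult.assoc)
  have PkP: "P * k * P = P" using source_compression_hom_eq[of 1] by (simp add: k_def hom_1 P_def)
  have "P * (k * k) * P = P * \<sigma> (K (V 1)) * P" by (simp add: K_V hom_mult k_def hom_1 mult.assoc)
  also have "\<dots> = P" using source_compression_hom_eq[of "V 1"] P
    by (simp add: P_def implemented hom_1 mult.assoc u_adj_u adj_u_adj)
  finally have PkkP: "P * (k * k) * P = P" .
  \<comment> \<open>\<open>(1 - P) k P\<close> has vanishing C*-norm\<close>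
  have "adj ((1 - P) * k * P) * ((1 - P) * k * P) = P * (k * k) * P - (P * k * P) * (k * P)"
    using P k by (simp add: adj_mult adj_diff algebra_simps mult.assoc PP)
  also have "\<dots> = 0" using PkP PkkP by (simp flip: mult.assoc)
  finally have "(1 - P) * k * P = 0" by (rule adj_mult_self_eq_0)
  then have kP: "k * P = P" using PkP by (simp add: left_diff_distrib)
  then have "adj (k * P) = P" using P by simp
  then have "P * k = P" using P k by (simp add: adj_mult)
  with kP show "\<sigma> (K 1) * (adj u * u) = adj u * u" "adj u * u * \<sigma> (K 1) = adj u * u"
    by (simp_all add: k_def P_def)
qed

lemma eq_dual_map: "K a = H a"
proof -
  obtain p where p: "\<sigma> p = adj u * u" using adj_compression_in_range[of 1] by (auto simp: hom_1)
  have Kp: "K 1 * p = p" "p * K 1 = p"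
    using hom_K_1_mult_source by (simp_all add: hom_eq_iff[symmetric] hom_mult p)
  have V_p: "V (p * b * p) = V b" for b
    using p by (simp add: hom_eq_iff[symmetric] implemented hom_mult mult.assoc u_adj_u adj_u_adj)
  have "K a = K 1 * K a * K 1" using K_V_K[of a] K_V[of "K a"] by simp
  also have "\<dots> = K (V (p * K a * p))" by (simp add: K_V V_p)
  also have "\<dots> = p * K a * p" using Kp by (simp add: K_V mult.assoc flip: mult.assoc[of "K 1"])
  finally have "\<sigma> (K a) = \<sigma> p * \<sigma> (K a) * \<sigma> p" by (metis hom_mult)
  then show ?thesis by (simp add: p source_compression_hom_eq hom_eq_iff[symmetric] hom_dual_map)
qed

end

end

section \<open>Covariant representations\<close>

lemma covariant_rep_implemented_map:
  assumes "covariant_rep \<sigma> U V" "x \<ge> 0"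
  shows "implemented_map \<sigma> (U x) (V x)"
  using assms by unfold_locales (auto simp: covariant_rep_def)

lemma covariant_rep_mult:
  "covariant_rep \<sigma> U V \<Longrightarrow> x \<ge> 0 \<Longrightarrow> y \<ge> 0 \<Longrightarrow> U (x + y) = U x * U y"
  by (simp add: covariant_rep_def)

lemma covariant_rep_0:
  assumes V: "action V" and cov: "covariant_rep \<sigma> U V"
  shows "U 0 = 1"
proof -
  interpret implemented_map \<sigma> "U 0" "V 0" using cov by (rule covariant_rep_implemented_map) simp
  have "U 0 * adj (U 0) = 1" using implemented[of 1] V by (simp add: action_def hom_1)
  moreover have "U 0 * U 0 = U 0" using covariant_rep_mult[OF cov, of 0 0] by simp
  ultimately show ?thesis by (metis mult.assoc mult_1_right)
qed

lemma action_dual_map: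
  assumes V: "action V" and cov: "covariant_rep \<sigma> U V"
  shows "action (\<lambda>x. dual_map \<sigma> (U x))"
  unfolding action_def
proof (intro conjI allI impI ext)
  fix x :: 'a assume "x \<ge> 0"
  with cov interpret implemented_map \<sigma> "U x" "V x" by (rule covariant_rep_implemented_map)
  show "bounded_positive_linear (dual_map \<sigma> (U x))" by (rule bounded_positive_linear_dual)
next
  interpret implemented_map \<sigma> "U 0" "V 0" using cov by (rule covariant_rep_implemented_map) simp
  show "dual_map \<sigma> (U 0) a = id a" for a
    using hom_dual_map[of a] covariant_rep_0[OF V cov] by (simp add: hom_eq_iff[symmetric])
next
  fix x y :: 'a and a assume x: "x \<ge> 0" and y: "y \<ge> 0"
  interpret X: implemented_map \<sigma> "U x" "V x" using cov x by (rule covariant_rep_implemented_map)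
  interpret Y: implemented_map \<sigma> "U y" "V y" using cov y by (rule covariant_rep_implemented_map)
  interpret XY: implemented_map \<sigma> "U (x + y)" "V (x + y)"
    using cov x y by (intro covariant_rep_implemented_map) auto
  show "(dual_map \<sigma> (U x) \<circ> dual_map \<sigma> (U y)) a = dual_map \<sigma> (U (x + y)) a"
    using covariant_rep_mult[OF cov y x] XY.hom_dual_map[of a]
    by (simp add: X.hom_eq_iff[symmetric] X.hom_dual_map Y.hom_dual_map add.commute adj_mult mult.assoc)
qed

lemma complete_interaction_dual_map:
  assumes V: "action V" and cov: "covariant_rep \<sigma> U V"
  shows "complete_interaction V (\<lambda>x. dual_map \<sigma> (U x))"
  unfolding complete_interaction_def interaction_def
proof (intro conjI allI impI V action_dual_map[OF V cov])
  fix x :: 'a assume "x \<ge> 0"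
  with cov interpret implemented_map \<sigma> "U x" "V x" by (rule covariant_rep_implemented_map)
  show "V x \<circ> dual_map \<sigma> (U x) \<circ> V x = V x" "dual_map \<sigma> (U x) \<circ> V x \<circ> dual_map \<sigma> (U x) = dual_map \<sigma> (U x)"
    by (simp_all add: fun_eq_iff V_dual_V dual_V_dual)
  show "V x (a * b) = V x a * V x b"
    if "a \<in> range (dual_map \<sigma> (U x)) \<or> b \<in> range (dual_map \<sigma> (U x))" for a b
    using that by (rule V_mult_if_dual_range)
  show "dual_map \<sigma> (U x) (a * b) = dual_map \<sigma> (U x) a * dual_map \<sigma> (U x) b"
    if "a \<in> range (V x) \<or> b \<in> range (V x)" for a b
    using that by (rule dual_mult_if_V_range)
  show "dual_map \<sigma> (U x) (V x a) = dual_map \<sigma> (U x) 1 * a * dual_map \<sigma> (U x) 1"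
    "V x (dual_map \<sigma> (U x) a) = V x 1 * a * V x 1" for a
    by (simp_all add: dual_V V_dual)
next
  fix x y :: 'a assume x: "x \<ge> 0" and y: "y \<ge> 0"
  interpret X: implemented_map \<sigma> "U x" "V x" using cov x by (rule covariant_rep_implemented_map)
  interpret Y: implemented_map \<sigma> "U y" "V y" using cov y by (rule covariant_rep_implemented_map)
  have "partial_isometry (U y * U x)"
    using covariant_rep_mult[OF cov y x] covariant_rep_implemented_map[OF cov, of "y + x"] x y
    by (simp add: implemented_map_def implemented_map_axioms_def)
  then have "adj (U y) * U y * (U x * adj (U x)) = U x * adj (U x) * (adj (U y) * U y)"
    by (intro partial_isometry_mult_projections_commute X.partial_isometry Y.partial_isometry)
  then show "dual_map \<sigma> (U y) 1 * V x 1 = V x 1 * dual_map \<sigma> (U y) 1"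
    by (simp add: X.hom_eq_iff[symmetric] X.hom_mult Y.hom_dual_map X.implemented X.hom_1 mult.assoc)
qed

lemma complete_interaction_eq_dual_map:
  assumes H: "action H" "complete_interaction V H" and cov: "covariant_rep \<sigma> U V" and x: "x \<ge> 0"
  shows "H x = dual_map \<sigma> (U x)"
proof
  fix a
  interpret implemented_map \<sigma> "U x" "V x" using cov x by (rule covariant_rep_implemented_map)
  have "positive_el (H x 1)"
    using H(1) x positive_el_1 by (auto simp: action_def bounded_positive_linear_def)
  moreover have "H x \<circ> V x \<circ> H x = H x" using H(2) x by (simp add: complete_interaction_def interaction_def)
  ultimately show "H x a = dual_map \<sigma> (U x) a"
    using H(2) x by (intro eq_dual_map) (auto simp: positive_el_def complete_interaction_def fun_eq_iff)
qed

theorem proposition4p2: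
  fixes V :: "'g::linordered_ab_group_add \<Rightarrow> 'a::cstar_algebra \<Rightarrow> 'a"
    and \<sigma>0 :: "'a \<Rightarrow> 'c::cstar_algebra" and U0 :: "'g \<Rightarrow> 'c"
  assumes "action V"
    and "covariant_rep \<sigma>0 U0 V"
  shows "(\<exists>H. action H \<and> complete_interaction V H \<and>
           (\<forall>H'. action H' \<and> complete_interaction V H' \<longrightarrow> (\<forall>x\<ge>0. H' x = H x))) \<and>
         (\<forall>H. action H \<and> complete_interaction V H \<longrightarrow>
           (\<forall>(\<sigma> :: 'a \<Rightarrow> 'd::cstar_algebra) U. covariant_rep \<sigma> U V \<longrightarrow>
              (\<forall>x\<ge>0. \<forall>a. \<sigma> (V x a) = U x * \<sigma> a * adj (U x) \<and>
                          \<sigma> (H x a) = adj (U x) * \<sigma> a * U x)))"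
proof (intro conjI exI allI impI)
  show "action (\<lambda>x. dual_map \<sigma>0 (U0 x))" "complete_interaction V (\<lambda>x. dual_map \<sigma>0 (U0 x))"
    using assms by (rule action_dual_map, rule complete_interaction_dual_map)
  show "H' x = dual_map \<sigma>0 (U0 x)" if "action H' \<and> complete_interaction V H'" "x \<ge> 0" for H' x
    using that assms(2) complete_interaction_eq_dual_map by blast
next
  fix H :: "'g \<Rightarrow> 'a \<Rightarrow> 'a" and \<sigma> :: "'a \<Rightarrow> 'd" and U :: "'g \<Rightarrow> 'd" and x :: 'g and a :: 'a
  assume H: "action H \<and> complete_interaction V H" and cov: "covariant_rep \<sigma> U V" and x: "x \<ge> 0"
  interpret implemented_map \<sigma> "U x" "V x" using cov x by (rule covariant_rep_implemented_map)
  show "\<sigma> (V x a) = U x * \<sigma> a * adj (U x)" by (rule implemented)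
  show "\<sigma> (H x a) = adj (U x) * \<sigma> a * U x"
    using complete_interaction_eq_dual_map[OF _ _ cov x] H by (simp add: hom_dual_map)
qed

end
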